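(* Let $b,c,t$ be positive integers, $n=tb$, and let $\mathbf{H}^{*}_{qc}$ be a $cb\times tb$ binary matrix which is a $c\times t$ array of $b\times b$ circulant matrices over $\mathbb{F}_2$, of rank $r$ over $\mathbb{F}_2$. Let $\mathcal{C}\subseteq\mathbb{F}_2^n$ be the code with parity-check matrix $\mathbf{H}^{*}_{qc}$ and $\Lambda=\mathcal{C}+2\mathbb{Z}^n=\{\mathbf{x}\in\mathbb{Z}^n:\mathbf{x}\bmod 2\in\mathcal{C}\}$. Suppose $l$ with $c\le l\le t$ is the least number of columns of circulants of $\mathbf{H}^{*}_{qc}$ forming a submatrix of rank $r$, and that the last $l$ columns of circulants form such a $cb\times lb$ submatrix $\mathbf{D}^{*}$. Suppose $d_1,\dots,d_l\in\{0,\dots,b\}$, $\bar d_j=b-d_j$, are such that the columns of $\mathbf{D}^{*}$ consisting, for each $j$, of the last $\bar d_j$ columns of its $j$-th column block (width $b$) are linearly independent over $\mathbb{F}_2$ and number exactly $r$. For each $i$ with $d_i\ge1$, let $\mathbf{w}_i=(\mathbf{w}_i^{(1)},\dots,\mathbf{w}_i^{(l)})\in\mathbb{F}_2^{lb}$, $\mathbf{w}_i^{(j)}\in\mathbb{F}_2^b$, be the vector with $\mathbf{D}^{*}\mathbf{w}_i^t=\mathbf{0}$ whose first $d_j$ entries of $\mathbf{w}_i^{(j)}$ are $(1,0,\dots,0)$ if $j=i$ and all $0$ otherwise; with $\sigma$ the cyclic right shift on $\mathbb{F}_2^b$, let $\mathbf{Q}$ be the $(lb-r)\times tb$ matrix with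 rows $(\mathbf{0}_{(t-l)b},\sigma^s(\mathbf{w}_i^{(1)}),\dots,\sigma^s(\mathbf{w}_i^{(l)}))$ for $i=1,\dots,l$, $s=0,\dots,d_i-1$. Let $\mathbf{G}=[\mathbf{I}_{(t-l)b}\,|\,\mathbf{G}']$ with $\mathbf{G}'$ a $(t-l)\times l$ array of $b\times b$ circulants, and assume $\mathbf{G}^{*}_{qc}=\begin{bmatrix}\mathbf{G}\\ \mathbf{Q}\end{bmatrix}$ is a generator matrix of $\mathcal{C}$. Let $\mathbf{R}=[\mathbf{0}_{r\times(t-l)b}\,|\,\mathbf{B}]$, where $\mathbf{B}$ is block diagonal with $j$-th block $[\mathbf{0}_{\bar d_j\times d_j}\ \ 2\mathbf{I}_{\bar d_j}]$, and let $\mathbf{G}_\Lambda=\begin{bmatrix}\mathbf{G}^{*}_{qc}\\ \mathbf{R}\end{bmatrix}$ (entries as integers). Then $|\det(\mathbf{G}_\Lambda)|=2^r$; that is, the volume of $\Lambda$ (the volume of a fundamental region, $\sqrt{\det(\mathbf{G}_\Lambda\mathbf{G}_\Lambda^t)}$) equals $2^r$, where $r=\mathrm{rank}_{\mathbb{F}_2}(\mathbf{H}^{*}_{qc})$.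
   Context: Codewords of a binary code are embedded in $\mathbb{Z}^n$ with entries $0,1$; $\Lambda=\mathcal{C}+2\mathbb{Z}^n$ is the Construction A (QC-LDPC) lattice of $\mathcal{C}$. *)

theory Defs
  imports "HOL-Library.Z2" "Jordan_Normal_Form.DL_Rank" "Jordan_Normal_Form.DL_Submatrix"
begin

text \<open>Conventions: matrices are Jordan_Normal_Form matrices; \<open>bit\<close> is the field F_2.
 All block indices are 0-based (paper block j corresponds to index j-1 here).\<close>

text \<open>A matrix is an array of b x b circulant blocks: entry (i,j) of each block
 depends only on (j - i) mod b (circulant generated by its first row).\<close>
definition circulant_blocks :: "nat \<Rightarrow> 'a mat \<Rightarrow> bool" where
  "circulant_blocks b M \<longleftrightarrow>
     (\<forall>i<dim_row M. \<forall>j<dim_col M.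
        M $$ (i, j) = M $$ (b * (i div b), b * (j div b) + (j mod b + b - i mod b) mod b))"

definition block_cols :: "nat \<Rightarrow> nat set \<Rightarrow> nat set" where
  "block_cols b S = {j. j div b \<in> S}"

definition col_block_submatrix :: "nat \<Rightarrow> 'a mat \<Rightarrow> nat set \<Rightarrow> 'a mat" where
  "col_block_submatrix b H S = submatrix H UNIV (block_cols b S)"

definition rank_F :: "'a::field mat \<Rightarrow> nat" where
  "rank_F A = vec_space.rank (dim_row A) A"

definition cols_lin_indep :: "'a::field mat \<Rightarrow> bool" where
  "cols_lin_indep A \<longleftrightarrow> distinct (cols A) \<and>
     module.lin_indpt class_ring (module_vec TYPE('a) (dim_row A)) (set (cols A))"

definition code_of_pcm :: "'a::field mat \<Rightarrow> 'a vec set" where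
  "code_of_pcm H = {x \<in> carrier_vec (dim_col H). H *\<^sub>v x = 0\<^sub>v (dim_row H)}"

text \<open>Generator matrix: its rows form a basis of the code (they are linearly
 independent and the codewords are exactly the combinations u G).\<close>
definition is_generator_matrix :: "'a::field mat \<Rightarrow> 'a vec set \<Rightarrow> bool" where
  "is_generator_matrix Gm C \<longleftrightarrow>
     {transpose_mat Gm *\<^sub>v u | u. u \<in> carrier_vec (dim_row Gm)} = C \<and>
     cols_lin_indep (transpose_mat Gm)"

text \<open>Row of Q for (i,s): zeros on the first (t-l)b positions, then
 sigma^s applied to each block w_i^(j), sigma the cyclic right shift on F_2^b.\<close>
definition Q_row :: "nat \<Rightarrow> nat \<Rightarrow> nat \<Rightarrow> (nat \<Rightarrow> bit vec) \<Rightarrow> nat \<Rightarrow> nat \<Rightarrow> bit vec" where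
  "Q_row t l b w i s = vec (t * b) (\<lambda>p.
     if p < (t - l) * b then 0
     else (let q = p - (t - l) * b in w i $ ((q div b) * b + (q mod b + b - s mod b) mod b)))"

definition Q_mat :: "nat \<Rightarrow> nat \<Rightarrow> nat \<Rightarrow> (nat \<Rightarrow> nat) \<Rightarrow> (nat \<Rightarrow> bit vec) \<Rightarrow> bit mat" where
  "Q_mat t l b d w = mat_of_rows (t * b)
     (concat (map (\<lambda>i. map (\<lambda>s. Q_row t l b w i s) [0..<d i]) [0..<l]))"

definition G_mat :: "nat \<Rightarrow> nat \<Rightarrow> nat \<Rightarrow> bit mat \<Rightarrow> bit mat" where
  "G_mat t l b G' = mat ((t - l) * b) (t * b) (\<lambda>(i, j).
     if j < (t - l) * b then (if i = j then 1 else 0) else G' $$ (i, j - (t - l) * b))"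

definition stack :: "'a mat \<Rightarrow> 'a mat \<Rightarrow> 'a mat" where
  "stack A B = mat_of_rows (dim_col A) (rows A @ rows B)"

text \<open>R = [0 | B], B block diagonal with j-th block [0_{dbar_j x d_j}  2 I_{dbar_j}].\<close>
definition R_mat :: "nat \<Rightarrow> nat \<Rightarrow> nat \<Rightarrow> (nat \<Rightarrow> nat) \<Rightarrow> int mat" where
  "R_mat t l b d = mat_of_rows (t * b)
     (concat (map (\<lambda>j. map (\<lambda>q. vec (t * b) (\<lambda>p.
         if p = (t - l) * b + j * b + d j + q then 2 else 0)) [0..<b - d j]) [0..<l]))"

definition bit_to_int :: "bit \<Rightarrow> int" where
  "bit_to_int x = (if x = 1 then 1 else 0)"

end

theory Submission
  imports Defs
begin

text \<open>Order the columns of \<open>G\<^sub>\<Lambda>\<close> so that the identity columns of \<open>G\<close> come last, the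
 columns at offset \<open>k < d\<^sub>j\<close> of block \<open>j\<close> come before them, ordered lexicographically by
 \<open>(k, j)\<close>, and the remaining \<open>r\<close> columns come first. In this order every row of \<open>G\<^sub>\<Lambda>\<close>
 has its last nonzero entry in a column of its own: a row of \<open>G\<close> at its identity entry, the
 row \<open>\<sigma>\<^sup>s(w\<^sub>i)\<close> of \<open>Q\<close> at offset \<open>s\<close> of block \<open>i\<close> (as \<open>w\<^sub>i\<close> is \<open>(1,0,\<dots>,0)\<close> on the
 first \<open>d\<^sub>i\<close> entries of block \<open>i\<close> and zero on the first \<open>d\<^sub>j\<close> entries of every other block),
 and a row of \<open>R\<close> at its only entry 2. These pivot columns exhaust all \<open>tb\<close> columns, so a
 single permutation survives in the Leibniz expansion of the determinant, and \<open>|det G\<^sub>\<Lambda>|\<close>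
 is the product of the pivots, \<open>2\<^sup>r\<close>.\<close>

lemma det_eq_signof_pivot_prod:
  fixes A :: "'a::comm_ring_1 mat" and key :: "nat \<Rightarrow> nat"
  assumes A: "A \<in> carrier_mat n n"
    and \<pi>: "\<pi> permutes {0..<n}"
    and key_inj: "inj_on key {0..<n}"
    and pivot: "\<And>i j. i < n \<Longrightarrow> j < n \<Longrightarrow> A $$ (i, j) \<noteq> 0 \<Longrightarrow> key j \<le> key (\<pi> i)"
  shows "det A = signof \<pi> * (\<Prod>i = 0..<n. A $$ (i, \<pi> i))"
proof -
  let ?term = "\<lambda>\<sigma>. signof \<sigma> * (\<Prod>i = 0..<n. A $$ (i, \<sigma> i))"
  have unique: "\<sigma> = \<pi>" if \<sigma>: "\<sigma> permutes {0..<n}" and nz: "?term \<sigma> \<noteq> 0" for \<sigma>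
  proof -
    have le: "key (\<sigma> j) \<le> key (\<pi> j)" if "j \<in> {0..<n}" for j
    proof (rule pivot)
      show "A $$ (j, \<sigma> j) \<noteq> 0" using nz that prod_zero[of "{0..<n}"] by force
    qed (use that permutes_in_image[OF \<sigma>] in auto)
    \<comment> \<open>both sides equal \<open>\<Sum>j<n. key j\<close>, so the pointwise inequality is an equality\<close>
    have "(\<Sum>i = 0..<n. key (\<sigma> i)) = (\<Sum>i = 0..<n. key (\<pi> i))"
      using sum.permute[OF \<sigma>, of key] sum.permute[OF \<pi>, of key] by (simp add: comp_def)
    then have eq: "key (\<sigma> j) = key (\<pi> j)" if "j \<in> {0..<n}" for j
      using sum_mono_inv[of "\<lambda>j. key (\<sigma> j)" "{0..<n}" "\<lambda>j. key (\<pi> j)", OF _ le] that by blast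
    show "\<sigma> = \<pi>"
    proof
      fix i
      show "\<sigma> i = \<pi> i"
      proof (cases "i < n")
        case True
        then show ?thesis
          using eq[of i] key_inj permutes_in_image[OF \<sigma>] permutes_in_image[OF \<pi>]
          by (auto dest: inj_onD)
      next
        case False
        then show ?thesis using permutes_not_in[OF \<sigma>] permutes_not_in[OF \<pi>] by auto
      qed
    qed
  qed
  have "det A = (\<Sum>\<sigma> | \<sigma> permutes {0..<n}. ?term \<sigma>)"
    by (rule det_def'[OF A])
  also have "\<dots> = (\<Sum>\<sigma> \<in> {\<pi>}. ?term \<sigma>)"
  proof (rule sum.mono_neutral_right)
    show "finite {\<sigma>. \<sigma> permutes {0..<n}}" by (simp add: finite_permutations)
    show "{\<pi>} \<subseteq> {\<sigma>. \<sigma> permutes {0..<n}}" using \<pi> by simp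
    show "\<forall>\<sigma> \<in> {\<sigma>. \<sigma> permutes {0..<n}} - {\<pi>}. ?term \<sigma> = 0" using unique by blast
  qed
  finally show ?thesis by simp
qed

definition pivot_wrt :: "(nat \<Rightarrow> nat) \<Rightarrow> 'a::zero vec \<Rightarrow> nat \<Rightarrow> bool" where
  "pivot_wrt key v p \<longleftrightarrow> p < dim_vec v \<and> (\<forall>c < dim_vec v. v $ c \<noteq> 0 \<longrightarrow> key c \<le> key p)"

lemma abs_det_mat_of_rows_pivots:
  fixes L :: "'a::linordered_idom vec list"
  assumes L: "set L \<subseteq> carrier_vec n"
    and pivots: "list_all2 (pivot_wrt key) L P"
    and P: "distinct P" "set P = {0..<n}"
    and key_inj: "inj_on key {0..<n}"
  shows "\<bar>det (mat_of_rows n L)\<bar> = (\<Prod>(v, p)\<leftarrow>zip L P. \<bar>v $ p\<bar>)"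
proof -
  have len_P: "length P = n" using distinct_card[OF P(1)] P(2) by simp
  then have len_L: "length L = n" using list_all2_lengthD[OF pivots] by simp
  have dim: "dim_vec (L ! i) = n" if "i < n" for i
    using subsetD[OF L nth_mem[of i L]] len_L that by simp
  have pivot_i: "pivot_wrt key (L ! i) (P ! i)" if "i < n" for i
    using list_all2_nthD[OF pivots, of i] len_L that by simp
  define \<pi> where "\<pi> i = (if i < n then P ! i else i)" for i
  have "bij_betw ((!) P) {0..<n} {0..<n}"
    using bij_betw_nth[OF P(1)] len_P P(2) by (simp add: lessThan_atLeast0)
  then have "bij_betw \<pi> {0..<n} {0..<n}"
    by (rule bij_betw_cong[THEN iffD1, rotated]) (simp add: \<pi>_def)
  then have \<pi>: "\<pi> permutes {0..<n}"
    by (rule bij_imp_permutes) (simp add: \<pi>_def)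
  have entry: "mat_of_rows n L $$ (i, j) = L ! i $ j" if "i < n" "j < n" for i j
    using that len_L by (simp add: mat_of_rows_index)
  have "det (mat_of_rows n L) = signof \<pi> * (\<Prod>i = 0..<n. mat_of_rows n L $$ (i, \<pi> i))"
  proof (rule det_eq_signof_pivot_prod[OF _ \<pi> key_inj])
    show "mat_of_rows n L \<in> carrier_mat n n" using mat_of_rows_carrier(1)[of n L] len_L by simp
    fix i j assume "i < n" "j < n" "mat_of_rows n L $$ (i, j) \<noteq> 0"
    then show "key j \<le> key (\<pi> i)"
      using pivot_i[of i] entry dim unfolding pivot_wrt_def \<pi>_def by auto
  qed
  also have "\<dots> = signof \<pi> * (\<Prod>i = 0..<n. L ! i $ (P ! i))"
  proof -
    have "mat_of_rows n L $$ (i, \<pi> i) = L ! i $ (P ! i)" if "i < n" for i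
      using entry[OF that, of "P ! i"] pivot_i[OF that] dim[OF that] that
      unfolding pivot_wrt_def \<pi>_def by simp
    then show ?thesis by simp
  qed
  moreover have "\<bar>signof \<pi> :: 'a\<bar> = 1"
    using signof_pm_one[of \<pi>, where 'a='a] by (metis abs_1 abs_minus_cancel empty_iff insertE)
  ultimately have "\<bar>det (mat_of_rows n L)\<bar> = (\<Prod>i = 0..<n. \<bar>L ! i $ (P ! i)\<bar>)"
    by (simp add: abs_mult abs_prod)
  also have "\<dots> = (\<Prod>(v, p)\<leftarrow>zip L P. \<bar>v $ p\<bar>)"
    by (simp add: prod.list_conv_set_nth len_L len_P)
  finally show ?thesis .
qed

lemma prod_list_abs_pivots_const:
  "list_all2 (\<lambda>v p. v $ p = e) L P \<Longrightarrow> (\<Prod>(v, p)\<leftarrow>zip L P. \<bar>v $ p\<bar>) = \<bar>e\<bar> ^ length L"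
  by (induction rule: list_all2_induct) auto

lemma abs_det_mat_of_rows_pivots_power:
  fixes L\<^sub>1 L\<^sub>2 :: "'a::linordered_idom vec list"
  assumes "set (L\<^sub>1 @ L\<^sub>2) \<subseteq> carrier_vec n"
    and pivots\<^sub>1: "list_all2 (\<lambda>v p. pivot_wrt key v p \<and> v $ p = 1) L\<^sub>1 P\<^sub>1"
    and pivots\<^sub>2: "list_all2 (\<lambda>v p. pivot_wrt key v p \<and> v $ p = e) L\<^sub>2 P\<^sub>2"
    and "distinct (P\<^sub>1 @ P\<^sub>2)" "set (P\<^sub>1 @ P\<^sub>2) = {0..<n}" "inj_on key {0..<n}"
  shows "\<bar>det (mat_of_rows n (L\<^sub>1 @ L\<^sub>2))\<bar> = \<bar>e\<bar> ^ length L\<^sub>2"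
proof -
  have "list_all2 (pivot_wrt key) (L\<^sub>1 @ L\<^sub>2) (P\<^sub>1 @ P\<^sub>2)"
    using list_all2_mono[OF pivots\<^sub>1] list_all2_mono[OF pivots\<^sub>2] by (simp add: list_all2_appendI)
  then have "\<bar>det (mat_of_rows n (L\<^sub>1 @ L\<^sub>2))\<bar> = (\<Prod>(v, p)\<leftarrow>zip (L\<^sub>1 @ L\<^sub>2) (P\<^sub>1 @ P\<^sub>2). \<bar>v $ p\<bar>)"
    using assms by (intro abs_det_mat_of_rows_pivots)
  moreover have "list_all2 (\<lambda>v p. v $ p = 1) L\<^sub>1 P\<^sub>1" "list_all2 (\<lambda>v p. v $ p = e) L\<^sub>2 P\<^sub>2"
    using list_all2_mono[OF pivots\<^sub>1] list_all2_mono[OF pivots\<^sub>2] by auto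
  ultimately show ?thesis
    using list_all2_lengthD[OF pivots\<^sub>1] by (simp add: zip_append prod_list_abs_pivots_const)
qed

lemma list_all2_concat_map:
  assumes "\<And>x y. x \<in> set xs \<Longrightarrow> y \<in> set (ys x) \<Longrightarrow> R (f x y) (g x y)"
  shows "list_all2 R (concat (map (\<lambda>x. map (f x) (ys x)) xs)) (concat (map (\<lambda>x. map (g x) (ys x)) xs))"
  using assms by (induction xs) (auto intro!: list_all2_appendI simp: list.rel_map list_all2_same)

lemma block_offset_less: "i < l \<Longrightarrow> s < b \<Longrightarrow> i * b + s < l * (b::nat)"
proof -
  assume "i < l" "s < b"
  then have "i * b + s < Suc i * b" by simp
  also have "\<dots> \<le> l * b" using \<open>i < l\<close> by (intro mult_right_mono) auto
  finally show ?thesis .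
qed

lemma block_decomposition:
  fixes N c :: nat
  assumes "N \<le> c" "c < N + l * b"
  obtains j k where "j < l" "k < b" "c = N + j * b + k"
proof
  show "(c - N) div b < l" using assms by (simp add: less_mult_imp_div_less)
  show "(c - N) mod b < b" using assms by (cases "b = 0") auto
  show "c = N + (c - N) div b * b + (c - N) mod b" using assms by simp
qed

lemma diff_mult_add_mult: "l \<le> t \<Longrightarrow> (t - l) * b + l * b = t * (b::nat)"
  by (metis add_mult_distrib le_add_diff_inverse2)

definition column_key :: "nat \<Rightarrow> nat \<Rightarrow> nat \<Rightarrow> (nat \<Rightarrow> nat) \<Rightarrow> nat \<Rightarrow> nat" where
  "column_key N l b d c =
     (if c < N then 2 * l * b + c
      else if (c - N) mod b < d ((c - N) div b) then l * b + (c - N) mod b * l + (c - N) div b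
      else c - N)"

lemma column_key_identity_part: "c < N \<Longrightarrow> column_key N l b d c = 2 * l * b + c"
  by (simp add: column_key_def)

lemma column_key_block:
  "k < b \<Longrightarrow> column_key N l b d (N + j * b + k) = (if k < d j then l * b + k * l + j else j * b + k)"
  by (simp add: column_key_def)

lemma column_key_block_less:
  assumes "j < l" "k < b"
  shows "column_key N l b d (N + j * b + k) < 2 * l * b"
  using assms block_offset_less[of k b j l] block_offset_less[of j l k b]
  by (simp add: column_key_block)

lemma inj_on_column_key: "inj_on (column_key N l b d) {0..<N + l * b}"
proof (rule inj_on_inverseI)
  fix c assume "c \<in> {0..<N + l * b}"
  then have c: "c < N + l * b" by simp
  let ?inv = "\<lambda>x. if 2 * l * b \<le> x then x - 2 * l * b
                 else if l * b \<le> x then N + (x - l * b) mod l * b + (x - l * b) div l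
                 else N + x"
  show "?inv (column_key N l b d c) = c"
  proof (cases "c < N")
    case True
    then show ?thesis by (simp add: column_key_identity_part)
  next
    case False
    then obtain j k where jk: "j < l" "k < b" and c_eq: "c = N + j * b + k"
      using c block_decomposition[of N c l b] by auto
    have "k * l + j < b * l" "j * b + k < l * b"
      using block_offset_less jk by auto
    then show ?thesis
      using jk by (auto simp: c_eq column_key_block)
  qed
qed

lemma stack_map_mat_stack:
  assumes "dim_col A = n" "dim_col B = n" "dim_col C = n"
  shows "stack (map_mat f (stack A B)) C = mat_of_rows n (map (map_vec f) (rows A @ rows B) @ rows C)"
proof -
  have AB: "set (rows A @ rows B) \<subseteq> carrier_vec n"
    using rows_carrier[of A] rows_carrier[of B] assms by auto
  have "map_mat f (stack A B) = map_mat f (mat_of_rows n (rows A @ rows B))"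
    unfolding stack_def using assms(1) by simp
  also have "\<dots> = mat_of_rows n (map (map_vec f) (rows A @ rows B))"
    by (rule mat_of_rows_map[OF AB, symmetric])
  moreover have "set (map (map_vec f) (rows A @ rows B)) \<subseteq> carrier_vec n"
    using AB by auto
  ultimately show ?thesis
    unfolding stack_def[of _ C] by (simp add: rows_mat_of_rows)
qed

lemma pivot_wrt_unit_vec:
  "x < n \<Longrightarrow> pivot_wrt key (vec n (\<lambda>p. if p = x then e else 0)) x"
  by (simp add: pivot_wrt_def)

lemma bit_to_int_eq_0_iff [simp]: "bit_to_int x = 0 \<longleftrightarrow> x = 0"
  by (simp add: bit_to_int_def)

lemma G_row_pivot:
  fixes G' :: "bit mat"
  assumes "l \<le> t" "i < (t - l) * b"
  defines "v \<equiv> map_vec bit_to_int (row (G_mat t l b G') i)"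
  shows "pivot_wrt (column_key ((t - l) * b) l b d) v i" "v $ i = 1"
proof -
  let ?N = "(t - l) * b"
  have tb: "?N + l * b = t * b" using diff_mult_add_mult[OF assms(1)] .
  have dim: "dim_vec v = t * b" by (simp add: v_def G_mat_def)
  have entry: "v $ c = bit_to_int (if c < ?N then (if i = c then 1 else 0) else G' $$ (i, c - ?N))"
    if "c < t * b" for c
    using that assms(2) by (simp add: v_def G_mat_def)
  show "v $ i = 1" using entry[of i] assms(2) tb by (simp add: bit_to_int_def)
  have "column_key ?N l b d c \<le> column_key ?N l b d i" if "c < t * b" "v $ c \<noteq> 0" for c
  proof (cases "c < ?N")
    case True
    then show ?thesis using that entry by (auto split: if_splits)
  next
    case False
    then have "?N \<le> c" "c < ?N + l * b" using that(1) tb by auto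
    then obtain j k where "j < l" "k < b" "c = ?N + j * b + k"
      by (rule block_decomposition)
    then show ?thesis
      using column_key_block_less[of j l k b ?N d] column_key_identity_part[OF assms(2)] by simp
  qed
  then show "pivot_wrt (column_key ?N l b d) v i"
    using assms(2) tb dim by (simp add: pivot_wrt_def)
qed

lemma Q_row_entry_identity_part:
  "l \<le> t \<Longrightarrow> c < (t - l) * b \<Longrightarrow> Q_row t l b w i s $ c = 0"
  using diff_mult_add_mult[of l t b] by (simp add: Q_row_def)

lemma Q_row_entry_block:
  assumes "l \<le> t" "j < l" "k < b" "s < b"
  shows "Q_row t l b w i s $ ((t - l) * b + j * b + k) = w i $ (j * b + (k + b - s) mod b)"
proof -
  have "(t - l) * b + j * b + k < t * b"
    using block_offset_less[OF assms(2,3)] diff_mult_add_mult[OF assms(1), of b] by linarith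
  then show ?thesis using assms(3,4) by (simp add: Q_row_def Let_def)
qed

lemma Q_row_pivot:
  assumes lt: "l \<le> t" and i: "i < l" and s: "s < d i" and d_i: "d i \<le> b"
    and w_lead: "\<forall>j<l. \<forall>k<d j. w i $ (j * b + k) = (if j = i \<and> k = 0 then 1 else 0)"
  defines "v \<equiv> map_vec bit_to_int (Q_row t l b w i s)"
  shows "pivot_wrt (column_key ((t - l) * b) l b d) v ((t - l) * b + i * b + s)"
    "v $ ((t - l) * b + i * b + s) = 1"
proof -
  let ?N = "(t - l) * b" and ?key = "column_key ((t - l) * b) l b d"
  let ?p = "?N + i * b + s"
  have tb: "?N + l * b = t * b" using diff_mult_add_mult[OF lt] .
  have sb: "s < b" using s d_i by simp
  have p: "?p < t * b" using block_offset_less[OF i sb] tb by linarith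
  have dim: "dim_vec v = t * b" by (simp add: v_def Q_row_def)
  have entry: "v $ c = bit_to_int (Q_row t l b w i s $ c)" if "c < t * b" for c
    using that by (simp add: v_def Q_row_def)
  have key_p: "?key ?p = l * b + s * l + i" using s sb by (simp add: column_key_block)
  have "w i $ (i * b + 0) = 1" using w_lead[rule_format, OF i, of 0] s by simp
  then show "v $ ?p = 1"
    using entry[OF p] Q_row_entry_block[OF lt i sb sb, of w i] by (simp add: bit_to_int_def)
  have "?key c \<le> ?key ?p" if c: "c < t * b" and nz: "v $ c \<noteq> 0" for c
  proof -
    have Q_nz: "Q_row t l b w i s $ c \<noteq> 0" using nz entry[OF c] by auto
    then have "?N \<le> c" using Q_row_entry_identity_part[OF lt] by (metis not_less)
    moreover have "c < ?N + l * b" using c tb by simp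
    ultimately obtain j k where j: "j < l" and k: "k < b" and c_eq: "c = ?N + j * b + k"
      by (rule block_decomposition)
    consider "d j \<le> k" | "k < d j" "k < s" | "k < d j" "s \<le> k" by linarith
    then show ?thesis
    proof cases
      case 1
      then show ?thesis using block_offset_less[OF j k] key_p k by (simp add: c_eq column_key_block)
    next
      case 2
      then show ?thesis
        using block_offset_less[of k s j l] j key_p k by (simp add: c_eq column_key_block)
    next
      case 3
      \<comment> \<open>the entry comes from offset \<open>k - s < d j\<close> of \<open>w i\<close>, where only the leading 1 is nonzero\<close>
      have "k - s < d j" using 3 by linarith
      have "k + b - s = (k - s) + b" using 3 by simp
      then have "(k + b - s) mod b = k - s" using k by (metis mod_add_self2 mod_less less_imp_diff_less)
      then have "w i $ (j * b + (k - s)) \<noteq> 0"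
        using Q_nz Q_row_entry_block[OF lt j k sb] by (simp add: c_eq)
      moreover have "w i $ (j * b + (k - s)) = (if j = i \<and> k - s = 0 then 1 else 0)"
        using w_lead j \<open>k - s < d j\<close> by blast
      ultimately have "j = i" "k = s" using 3(2) by (auto split: if_splits)
      then show ?thesis by (simp add: c_eq)
    qed
  qed
  then show "pivot_wrt ?key v ?p" using p dim by (simp add: pivot_wrt_def)
qed

definition Q_pivots :: "nat \<Rightarrow> nat \<Rightarrow> nat \<Rightarrow> (nat \<Rightarrow> nat) \<Rightarrow> nat list" where
  "Q_pivots t l b d = concat (map (\<lambda>i. map (\<lambda>s. (t - l) * b + i * b + s) [0..<d i]) [0..<l])"

definition R_pivots :: "nat \<Rightarrow> nat \<Rightarrow> nat \<Rightarrow> (nat \<Rightarrow> nat) \<Rightarrow> nat list" where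
  "R_pivots t l b d = concat (map (\<lambda>j. map (\<lambda>q. (t - l) * b + j * b + d j + q) [0..<b - d j]) [0..<l])"

lemma length_Q_pivots: "length (Q_pivots t l b d) = (\<Sum>j<l. d j)"
  by (simp add: Q_pivots_def length_concat o_def interv_sum_list_conv_sum_set_nat lessThan_atLeast0)

lemma length_R_pivots: "length (R_pivots t l b d) = (\<Sum>j<l. b - d j)"
  by (simp add: R_pivots_def length_concat o_def interv_sum_list_conv_sum_set_nat lessThan_atLeast0)

lemma G_rows_pivots:
  fixes G' :: "bit mat"
  assumes "l \<le> t"
  shows "list_all2 (\<lambda>v p. pivot_wrt (column_key ((t - l) * b) l b d) v p \<and> v $ p = 1)
           (map (map_vec bit_to_int) (rows (G_mat t l b G'))) [0..<(t - l) * b]"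
  using G_row_pivot[OF assms] by (simp add: rows_def G_mat_def list.rel_map list_all2_same)

lemma Q_rows_pivots:
  assumes "l \<le> t" "\<forall>j<l. d j \<le> b"
    and w_lead: "\<forall>i<l. d i \<ge> 1 \<longrightarrow>
                   (\<forall>j<l. \<forall>k<d j. w i $ (j * b + k) = (if j = i \<and> k = 0 then 1 else 0))"
  shows "list_all2 (\<lambda>v p. pivot_wrt (column_key ((t - l) * b) l b d) v p \<and> v $ p = 1)
           (map (map_vec bit_to_int) (rows (Q_mat t l b d w))) (Q_pivots t l b d)"
proof -
  have "rows (Q_mat t l b d w) = concat (map (\<lambda>i. map (Q_row t l b w i) [0..<d i]) [0..<l])"
    unfolding Q_mat_def by (rule rows_mat_of_rows) (auto simp: Q_row_def)
  moreover have "list_all2 (\<lambda>v p. pivot_wrt (column_key ((t - l) * b) l b d) v p \<and> v $ p = 1)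
      (concat (map (\<lambda>i. map (\<lambda>s. map_vec bit_to_int (Q_row t l b w i s)) [0..<d i]) [0..<l]))
      (Q_pivots t l b d)"
    unfolding Q_pivots_def
  proof (rule list_all2_concat_map)
    fix i s assume "i \<in> set [0..<l]" "s \<in> set [0..<d i]"
    then have "i < l" "s < d i" by auto
    then show "pivot_wrt (column_key ((t - l) * b) l b d) (map_vec bit_to_int (Q_row t l b w i s))
                 ((t - l) * b + i * b + s) \<and>
               map_vec bit_to_int (Q_row t l b w i s) $ ((t - l) * b + i * b + s) = 1"
      using Q_row_pivot[OF assms(1)] assms(2) w_lead by simp
  qed
  ultimately show ?thesis by (simp add: map_concat o_def)
qed

lemma R_rows_pivots:
  assumes "l \<le> t" "\<forall>j<l. d j \<le> b"
  shows "list_all2 (\<lambda>v p. pivot_wrt (column_key ((t - l) * b) l b d) v p \<and> v $ p = 2)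
           (rows (R_mat t l b d)) (R_pivots t l b d)"
proof -
  let ?row = "\<lambda>x. vec (t * b) (\<lambda>p. if p = x then 2 else (0::int))"
  have "rows (R_mat t l b d) =
      concat (map (\<lambda>j. map (\<lambda>q. ?row ((t - l) * b + j * b + d j + q)) [0..<b - d j]) [0..<l])"
    unfolding R_mat_def by (rule rows_mat_of_rows) auto
  moreover have "list_all2 (\<lambda>v p. pivot_wrt (column_key ((t - l) * b) l b d) v p \<and> v $ p = 2)
      (concat (map (\<lambda>j. map (\<lambda>q. ?row ((t - l) * b + j * b + d j + q)) [0..<b - d j]) [0..<l]))
      (R_pivots t l b d)"
    unfolding R_pivots_def
  proof (rule list_all2_concat_map)
    fix j q assume "j \<in> set [0..<l]" "q \<in> set [0..<b - d j]"
    then have "j * b + (d j + q) < l * b" using block_offset_less[of j l "d j + q" b] by auto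
    then have "(t - l) * b + j * b + d j + q < t * b"
      using diff_mult_add_mult[OF assms(1), of b] by linarith
    then show "pivot_wrt (column_key ((t - l) * b) l b d) (?row ((t - l) * b + j * b + d j + q))
                 ((t - l) * b + j * b + d j + q) \<and>
               ?row ((t - l) * b + j * b + d j + q) $ ((t - l) * b + j * b + d j + q) = 2"
      using pivot_wrt_unit_vec by simp
  qed
  ultimately show ?thesis by simp
qed

lemma pivot_columns:
  assumes lt: "l \<le> t" and d_range: "\<forall>j<l. d j \<le> b"
  defines "P \<equiv> [0..<(t - l) * b] @ Q_pivots t l b d @ R_pivots t l b d"
  shows "set P = {0..<t * b}" "distinct P"
proof -
  let ?N = "(t - l) * b"
  have tb: "?N + l * b = t * b" using diff_mult_add_mult[OF lt] .
  have in_block: "?N + j * b + k < t * b" if "j < l" "k < b" for j k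
    using block_offset_less[OF that] tb by linarith
  have "(\<Sum>j<l. d j) + (\<Sum>j<l. b - d j) = (\<Sum>j<l. b)"
    unfolding sum.distrib[symmetric] using d_range by (intro sum.cong) auto
  then have len: "length P = t * b"
    using tb by (simp add: P_def length_Q_pivots length_R_pivots)
  show set_P: "set P = {0..<t * b}"
  proof
    show "set P \<subseteq> {0..<t * b}"
    proof
      fix c assume "c \<in> set P"
      then consider "c < ?N"
        | i s where "i < l" "s < d i" "c = ?N + i * b + s"
        | j q where "j < l" "q < b - d j" "c = ?N + j * b + (d j + q)"
        unfolding P_def Q_pivots_def R_pivots_def by (auto simp: add.assoc)
      then show "c \<in> {0..<t * b}"
      proof cases
        case 1
        then show ?thesis using tb by simp
      next
        case (2 i s)
        then have "s < b" using d_range by (meson order_less_le_trans)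
        then show ?thesis using 2 in_block[of i s] by simp
      next
        case (3 j q)
        then show ?thesis using in_block[of j "d j + q"] by simp
      qed
    qed
    show "{0..<t * b} \<subseteq> set P"
    proof
      fix c assume c: "c \<in> {0..<t * b}"
      show "c \<in> set P"
      proof (cases "c < ?N")
        case True
        then show ?thesis by (simp add: P_def)
      next
        case False
        then have "?N \<le> c" "c < ?N + l * b" using c tb by auto
        then obtain j k where j: "j < l" and k: "k < b" and c_eq: "c = ?N + j * b + k"
          by (rule block_decomposition)
        show ?thesis
        proof (cases "k < d j")
          case True
          then have "c \<in> set (Q_pivots t l b d)" using j by (auto simp: Q_pivots_def c_eq intro!: bexI[of _ j])
          then show ?thesis by (simp add: P_def)
        next
          case False
          then have "c = ?N + j * b + d j + (k - d j)" "k - d j < b - d j" using k c_eq by auto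
          then have "c \<in> set (R_pivots t l b d)" using j unfolding R_pivots_def by (auto intro!: bexI[of _ j])
          then show ?thesis by (simp add: P_def)
        qed
      qed
    qed
  qed
  show "distinct P" using card_distinct[of P] set_P len by simp
qed

lemma abs_det_lattice_generator:
  fixes G' :: "bit mat" and w :: "nat \<Rightarrow> bit vec"
  assumes lt: "l \<le> t" and d_range: "\<forall>j<l. d j \<le> b"
    and w_lead: "\<forall>i<l. d i \<ge> 1 \<longrightarrow>
                   (\<forall>j<l. \<forall>k<d j. w i $ (j * b + k) = (if j = i \<and> k = 0 then 1 else 0))"
  shows "\<bar>det (stack (map_mat bit_to_int (stack (G_mat t l b G') (Q_mat t l b d w)))
                     (R_mat t l b d))\<bar> = 2 ^ (\<Sum>j<l. b - d j)"
proof -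
  let ?key = "column_key ((t - l) * b) l b d"
  define GQL where "GQL = map (map_vec bit_to_int) (rows (G_mat t l b G') @ rows (Q_mat t l b d w))"
  define RL where "RL = rows (R_mat t l b d)"
  have dims: "dim_col (G_mat t l b G') = t * b" "dim_col (Q_mat t l b d w) = t * b"
    "dim_col (R_mat t l b d) = t * b"
    by (simp_all add: G_mat_def Q_mat_def R_mat_def)
  have R: "list_all2 (\<lambda>v p. pivot_wrt ?key v p \<and> v $ p = 2) RL (R_pivots t l b d)"
    unfolding RL_def by (rule R_rows_pivots[OF lt d_range])
  have "stack (map_mat bit_to_int (stack (G_mat t l b G') (Q_mat t l b d w))) (R_mat t l b d) =
      mat_of_rows (t * b) (GQL @ RL)"
    unfolding GQL_def RL_def using dims by (rule stack_map_mat_stack)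
  moreover have "\<bar>det (mat_of_rows (t * b) (GQL @ RL))\<bar> = \<bar>2\<bar> ^ length RL"
  proof (rule abs_det_mat_of_rows_pivots_power[OF _ _ R])
    show "set (GQL @ RL) \<subseteq> carrier_vec (t * b)"
      unfolding GQL_def RL_def using dims rows_carrier[of "G_mat t l b G'"]
        rows_carrier[of "Q_mat t l b d w"] rows_carrier[of "R_mat t l b d"] by auto
    show "list_all2 (\<lambda>v p. pivot_wrt ?key v p \<and> v $ p = 1) GQL ([0..<(t - l) * b] @ Q_pivots t l b d)"
      unfolding GQL_def map_append
      by (intro list_all2_appendI G_rows_pivots[OF lt] Q_rows_pivots[OF lt d_range w_lead])
    show "distinct (([0..<(t - l) * b] @ Q_pivots t l b d) @ R_pivots t l b d)"
      "set (([0..<(t - l) * b] @ Q_pivots t l b d) @ R_pivots t l b d) = {0..<t * b}"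
      using pivot_columns[OF lt d_range] by simp_all
    show "inj_on ?key {0..<t * b}"
      using inj_on_column_key diff_mult_add_mult[OF lt] by metis
  qed
  moreover have "length RL = (\<Sum>j<l. b - d j)"
    using list_all2_lengthD[OF R] length_R_pivots by simp
  ultimately show ?thesis by simp
qed

theorem corollary1:
  fixes b c t l r :: nat
    and H :: "bit mat" and G' :: "bit mat"
    and d :: "nat \<Rightarrow> nat" and w :: "nat \<Rightarrow> bit vec"
  assumes "b > 0" and "c > 0" and "t > 0"
    and H_dim: "H \<in> carrier_mat (c * b) (t * b)"
    and H_circ: "circulant_blocks b H"
    and r_def: "r = rank_F H"
    and l_bounds: "c \<le> l" "l \<le> t"
    and l_least: "l = (LEAST k. \<exists>S \<subseteq> {0..<t}. card S = k \<and>
                          rank_F (col_block_submatrix b H S) = r)"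
    and D_rank: "rank_F (col_block_submatrix b H {t - l..<t}) = r"
    and d_range: "\<forall>j<l. d j \<le> b"
    and sel_indep: "cols_lin_indep (submatrix (col_block_submatrix b H {t - l..<t}) UNIV
                        {p. p < l * b \<and> d (p div b) \<le> p mod b})"
    and sel_card: "(\<Sum>j<l. b - d j) = r"
    and w_props: "\<forall>i<l. d i \<ge> 1 \<longrightarrow>
          w i \<in> carrier_vec (l * b) \<and>
          col_block_submatrix b H {t - l..<t} *\<^sub>v w i = 0\<^sub>v (c * b) \<and>
          (\<forall>j<l. \<forall>k<d j. w i $ (j * b + k) = (if j = i \<and> k = 0 then 1 else 0))"
    and G'_dim: "G' \<in> carrier_mat ((t - l) * b) (l * b)"
    and G'_circ: "circulant_blocks b G'"
    and gen: "is_generator_matrix (stack (G_mat t l b G') (Q_mat t l b d w)) (code_of_pcm H)"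
  shows "\<bar>det (stack (map_mat bit_to_int (stack (G_mat t l b G') (Q_mat t l b d w)))
                     (R_mat t l b d))\<bar> = 2 ^ r"
  using abs_det_lattice_generator[OF l_bounds(2) d_range] w_props sel_card by simp

end
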